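(* Let $\alpha>0$ and let $\mathfrak f(t)=\sum_{n\ge0}\widehat{\mathfrak f}(n)e^{int}$ with $\sum_{n\ge0}n^\alpha|\widehat{\mathfrak f}(n)|<\infty$. Then $\mathfrak f\in A_+^\alpha(\mathbb{T})$, i.e. $\sum_{n\ge0}k^{\alpha+1}(n)|W_+^\alpha\widehat{\mathfrak f}(n)|<\infty$.
   Context: For $\gamma\in\mathbb{R}$, $k^\gamma(0)=1$, $k^\gamma(n)=\frac{\gamma(\gamma+1)\cdots(\gamma+n-1)}{n!}$ for $n\ge1$. For a sequence $f$ on $\mathbb{Z}$ (extended by $0$ for $n<0$ when given on $\mathbb{N}_0$): $W_+f(n)=f(n)-f(n+1)$, $W_+^m$ its powers; for $\alpha>0$, $W_+^{-\alpha}f(n)=\sum_{j\ge n}k^\alpha(j-n)f(j)$ and $W_+^\alpha f=W_+^mW_+^{-(m-\alpha)}f$ with $m=[\alpha]+1$. $A_+^\alpha(\mathbb{T})$ is the space of continuous $2\pi$-periodic functions $\mathfrak f(t)=\sum_{n\ge0}\widehat{\mathfrak f}(n)e^{int}$ with norm $\sum_{n\ge0}k^{\alpha+1}(n)|W_+^\alpha\widehat{\mathfrak f}(n)|<\infty$. *)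

theory Defs
  imports "HOL-Analysis.Analysis"
begin

definition kker :: "real \<Rightarrow> nat \<Rightarrow> real" where
  "kker \<gamma> n = pochhammer \<gamma> n / fact n"

definition Wdiff :: "(nat \<Rightarrow> complex) \<Rightarrow> nat \<Rightarrow> complex" where
  "Wdiff f n = f n - f (Suc n)"

text \<open>Weyl sum W_+^{-alpha} f(n) = sum_{j >= n} k^alpha(j-n) f(j).\<close>
definition Wsum :: "real \<Rightarrow> (nat \<Rightarrow> complex) \<Rightarrow> nat \<Rightarrow> complex" where
  "Wsum \<alpha> f n = (\<Sum>i. complex_of_real (kker \<alpha> i) * f (i + n))"

definition Wfrac :: "real \<Rightarrow> (nat \<Rightarrow> complex) \<Rightarrow> nat \<Rightarrow> complex" where
  "Wfrac \<alpha> f = (let m = nat \<lfloor>\<alpha>\<rfloor> + 1 in (Wdiff ^^ m) (Wsum (real m - \<alpha>) f))"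

text \<open>Membership of f(t) = sum_n c(n) e^{int} in A_+^alpha(T), expressed via its coefficients c.\<close>
definition in_A_plus :: "real \<Rightarrow> (nat \<Rightarrow> complex) \<Rightarrow> bool" where
  "in_A_plus \<alpha> c \<longleftrightarrow> summable (\<lambda>n. kker (\<alpha> + 1) n * norm (Wfrac \<alpha> c n))"

end

theory Submission imports Defs begin

text \<open>
  By Pascal's rule k^g(i+1) - k^g(i) = k^(g-1)(i+1), one difference lowers the order of a
  Weyl sum by one, so for absolutely summable f the Weyl difference collapses to the single
  series W_+^\<alpha> f(n) = \<Sum>_j k^(-\<alpha>)(j) f(j+n). The kernel k^(-\<alpha>) is absolutely summable:
  it has eventually constant sign and its partial sums k^(1-\<alpha>)(J) are bounded. Since
  k^(\<alpha>+1) is increasing, exchanging the order of summation gives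
  \<Sum>_n k^(\<alpha>+1)(n) |W_+^\<alpha> f(n)| \<le> (\<Sum>_j |k^(-\<alpha>)(j)|) \<Sum>_N k^(\<alpha>+1)(N) |f(N)|,
  and the last series converges because k^(\<alpha>+1)(N) \<le> (1+\<alpha>) N^\<alpha>.
\<close>

lemma kker_0 [simp]: "kker g 0 = 1"
  by (simp add: kker_def)

lemma kker_Suc: "kker g (Suc n) = kker g n * ((g + real n) / (real n + 1))"
  by (simp add: kker_def pochhammer_rec' field_simps)

lemma kker_Suc_diff: "kker g (Suc i) - kker g i = kker (g - 1) (Suc i)"
proof -
  have "pochhammer (g - 1) (Suc i) = (g - 1) * pochhammer g i"
    by (simp add: pochhammer_rec)
  then have "kker (g - 1) (Suc i) = (g - 1) * pochhammer g i / ((real i + 1) * fact i)"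
    by (simp add: kker_def algebra_simps)
  moreover have "kker g (Suc i) = (g + real i) * pochhammer g i / ((real i + 1) * fact i)"
    by (simp add: kker_def pochhammer_rec' algebra_simps)
  moreover have "kker g i = (real i + 1) * pochhammer g i / ((real i + 1) * fact i)"
    by (simp add: kker_def)
  ultimately show ?thesis
    by (simp add: diff_divide_distrib[symmetric] algebra_simps)
qed

lemma sum_kker: "(\<Sum>j<Suc J. kker g j) = kker (g + 1) J"
proof (induction J)
  case (Suc J)
  then show ?case
    using kker_Suc_diff[of "g + 1" J] by simp
qed simp

lemma kker_nonneg: "g \<ge> 0 \<Longrightarrow> kker g n \<ge> 0"
  by (induction n) (auto simp: kker_Suc)

lemma mono_kker:
  assumes "g \<ge> 1"
  shows "mono (kker g)"
proof (rule incseq_SucI)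
  fix n
  have "1 \<le> (g + real n) / (real n + 1)"
    using assms by simp
  from mult_left_mono[OF this kker_nonneg] assms show "kker g n \<le> kker g (Suc n)"
    unfolding kker_Suc by simp
qed

lemma kker_eventually_one_signed:
  obtains \<sigma> :: real where "\<bar>\<sigma>\<bar> = 1" "\<And>j. -g \<le> real j \<Longrightarrow> 0 \<le> \<sigma> * kker g j"
proof
  let ?m = "nat \<lceil>-g\<rceil>"
  define \<sigma> :: real where "\<sigma> = (if kker g ?m \<ge> 0 then 1 else -1)"
  show "\<bar>\<sigma>\<bar> = 1" by (simp add: \<sigma>_def)
  have "0 \<le> \<sigma> * kker g j" if "?m \<le> j" for j
    using that
  proof (induction j rule: dec_induct)
    case (step j)
    then have "0 \<le> (g + real j) / (real j + 1)"
      by (simp add: nat_le_iff ceiling_le_iff)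
    with step.IH show ?case
      unfolding kker_Suc mult.assoc[symmetric] by (rule mult_nonneg_nonneg)
  qed (simp add: \<sigma>_def)
  then show "0 \<le> \<sigma> * kker g j" if "-g \<le> real j" for j
    using that by (simp add: nat_le_iff ceiling_le_iff)
qed

lemma kker_bounded:
  assumes "g \<le> 1"
  obtains B where "\<And>J. \<bar>kker g J\<bar> \<le> B"
proof
  let ?N = "nat \<lceil>-g\<rceil>"
  show "\<bar>kker g J\<bar> \<le> (\<Sum>i\<le>?N. \<bar>kker g i\<bar>)" for J
  proof (induction J)
    case (Suc J)
    show ?case
    proof (cases "Suc J \<le> ?N")
      case False
      then have "0 \<le> g + real J"
        by (simp add: not_le less_Suc_eq_le nat_le_iff ceiling_le_iff)
      then have "\<bar>kker g (Suc J)\<bar> = \<bar>kker g J\<bar> * ((g + real J) / (real J + 1))"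
        by (simp add: kker_Suc abs_mult)
      also have "\<dots> \<le> \<bar>kker g J\<bar>"
        using assms by (intro mult_left_le) auto
      finally have "\<bar>kker g (Suc J)\<bar> \<le> \<bar>kker g J\<bar>" .
      with Suc.IH show ?thesis by linarith
    qed (rule member_le_sum; simp)
  qed (rule member_le_sum; simp)
qed

lemma summable_abs_kker:
  assumes "g \<le> 0"
  shows "summable (\<lambda>j. \<bar>kker g j\<bar>)"
proof -
  let ?m = "nat \<lceil>-g\<rceil>" and ?P = "\<lambda>J. \<Sum>i<J. kker g i"
  obtain \<sigma> where \<sigma>: "\<bar>\<sigma>\<bar> = 1" "\<And>j. -g \<le> real j \<Longrightarrow> 0 \<le> \<sigma> * kker g j"
    using kker_eventually_one_signed[of g] by blast
  have tail: "\<bar>kker g (j + ?m)\<bar> = \<sigma> * kker g (j + ?m)" for j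
  proof -
    have "-g \<le> real (j + ?m)"
      using real_nat_ceiling_ge[of "-g"] by simp
    then show ?thesis
      using \<sigma> by (metis abs_mult abs_of_nonneg mult_1)
  qed
  obtain B where B: "\<And>J. \<bar>kker (g + 1) J\<bar> \<le> B"
    using kker_bounded[of "g + 1"] assms by auto
  have P: "\<bar>?P J\<bar> \<le> B" for J
    using B[of 0] B[of "J - 1"] sum_kker[of g "J - 1"] by (cases J) auto
  have "summable (\<lambda>j. \<bar>kker g (j + ?m)\<bar>)"
  proof (rule summableI_nonneg_bounded)
    fix J
    have "(\<Sum>j<J. \<bar>kker g (j + ?m)\<bar>) = \<sigma> * (\<Sum>j<J. kker g (j + ?m))"
      by (simp add: tail sum_distrib_left)
    also have "(\<Sum>j<J. kker g (j + ?m)) = ?P (J + ?m) - ?P ?m"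
      by (simp add: sum.shift_bounds_nat_ivl[of _ 0 ?m J, simplified, symmetric] add.commute
          lessThan_atLeast0 sum_diff_nat_ivl)
    also have "\<sigma> * (?P (J + ?m) - ?P ?m) \<le> \<bar>?P (J + ?m) - ?P ?m\<bar>"
      using \<sigma>(1) abs_ge_self[of "\<sigma> * _"] by (simp only: abs_mult mult_1)
    also have "\<dots> \<le> 2 * B"
      using P[of "J + ?m"] P[of ?m] by linarith
    finally show "(\<Sum>j<J. \<bar>kker g (j + ?m)\<bar>) \<le> 2 * B" .
  qed simp
  then show ?thesis
    by (rule summable_iff_shift[THEN iffD1])
qed

lemma kker_le_powr:
  assumes "\<alpha> \<ge> 0" "N \<ge> 1"
  shows "kker (\<alpha> + 1) N \<le> (1 + \<alpha>) * real N powr \<alpha>"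
  using assms(2)
proof (induction N rule: dec_induct)
  case base
  show ?case by (simp add: kker_Suc[of _ 0, simplified])
next
  case (step N)
  have N: "real N \<ge> 1" using step.hyps(1) by simp
  have "1 / (real N + 1) \<le> ln ((real N + 1) / real N)"
    using ln_le_minus_one[of "real N / (real N + 1)"] N by (simp add: ln_div field_simps)
  then have "1 + \<alpha> / (real N + 1) \<le> 1 + \<alpha> * ln ((real N + 1) / real N)"
    using mult_left_mono[OF _ assms(1)] by fastforce
  also have "\<dots> \<le> ((real N + 1) / real N) powr \<alpha>"
    using exp_ge_add_one_self N by (simp add: powr_def)
  finally have ratio: "1 + \<alpha> / (real N + 1) \<le> ((real N + 1) / real N) powr \<alpha>" .
  have "kker (\<alpha> + 1) (Suc N) = kker (\<alpha> + 1) N * (1 + \<alpha> / (real N + 1))"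
    using N by (simp add: kker_Suc field_simps)
  also have "\<dots> \<le> (1 + \<alpha>) * real N powr \<alpha> * ((real N + 1) / real N) powr \<alpha>"
    using step.IH assms(1) ratio by (intro mult_mono) auto
  also have "\<dots> = (1 + \<alpha>) * real (Suc N) powr \<alpha>"
    using N by (simp add: powr_divide add.commute)
  finally show ?case .
qed

lemma summable_norm_bounded_mult_shift:
  fixes b :: "nat \<Rightarrow> real" and c :: "nat \<Rightarrow> 'a :: real_normed_div_algebra"
  assumes "\<And>i. \<bar>b i\<bar> \<le> B" "summable (\<lambda>i. norm (c i))"
  shows "summable (\<lambda>i. norm (of_real (b i) * c (i + n)))"
proof (rule summable_comparison_test')
  show "summable (\<lambda>i. B * norm (c (i + n)))"
    using summable_ignore_initial_segment[OF assms(2), of n] by (intro summable_mult) simp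
  show "norm (norm (of_real (b i) * c (i + n))) \<le> B * norm (c (i + n))" for i
    using assms(1)[of i] by (simp add: norm_mult mult_right_mono)
qed

lemma Wdiff_Wsum:
  assumes "g \<le> 1" "summable (\<lambda>i. norm (c i))"
  shows "Wdiff (Wsum g c) = Wsum (g - 1) c"
proof
  fix n
  obtain B where "\<And>J. \<bar>kker g J\<bar> \<le> B"
    using kker_bounded assms(1) by blast
  from summable_norm_bounded_mult_shift[OF this assms(2)]
  have f: "summable (\<lambda>i. of_real (kker g i) * c (i + m))" for m
    by (rule summable_norm_cancel)
  obtain B' where "\<And>J. \<bar>kker (g - 1) J\<bar> \<le> B'"
    using kker_bounded[of "g - 1"] assms(1) by auto
  from summable_norm_bounded_mult_shift[OF this assms(2)]
  have h: "summable (\<lambda>i. of_real (kker (g - 1) i) * c (i + n))"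
    by (rule summable_norm_cancel)
  define F where "F = (\<lambda>i. of_real (kker g (Suc i)) * c (Suc i + n))"
  define H where "H = (\<lambda>i. of_real (kker (g - 1) (Suc i)) * c (Suc i + n))"
  have "F i - H i = of_real (kker g i) * c (i + Suc n)" for i
    using kker_Suc_diff[of g i] by (simp add: F_def H_def flip: left_diff_distrib of_real_diff)
  then have "Wsum g c (Suc n) = (\<Sum>i. F i - H i)"
    by (simp add: Wsum_def)
  also have "\<dots> = suminf F - suminf H"
    using f[of n, THEN summable_Suc_iff[THEN iffD2]] h[THEN summable_Suc_iff[THEN iffD2]]
    unfolding F_def H_def by (rule suminf_diff[symmetric])
  finally have "Wsum g c (Suc n) = suminf F - suminf H" .
  moreover have "Wsum g c n = c n + suminf F"
    using suminf_split_head[OF f[of n]] by (simp add: Wsum_def F_def)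
  moreover have "Wsum (g - 1) c n = c n + suminf H"
    using suminf_split_head[OF h] by (simp add: Wsum_def H_def)
  ultimately show "Wdiff (Wsum g c) n = Wsum (g - 1) c n"
    by (simp add: Wdiff_def)
qed

lemma Wfrac_eq_Wsum:
  assumes "\<alpha> > 0" "summable (\<lambda>i. norm (c i))"
  shows "Wfrac \<alpha> c = Wsum (-\<alpha>) c"
proof -
  have iterate: "(Wdiff ^^ k) (Wsum g c) = Wsum (g - real k) c" if "g \<le> 1" for g k
    by (induction k) (use that in \<open>simp_all add: Wdiff_Wsum[OF _ assms(2)] algebra_simps\<close>)
  let ?m = "nat \<lfloor>\<alpha>\<rfloor> + 1"
  have "real ?m - \<alpha> \<le> 1" using assms(1) by linarith
  from iterate[OF this, of ?m] show ?thesis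
    unfolding Wfrac_def Let_def by simp
qed

lemma norm_Wsum_le:
  assumes "g \<le> 1" "summable (\<lambda>i. norm (c i))"
  shows "norm (Wsum g c n) \<le> (\<Sum>j. \<bar>kker g j\<bar> * norm (c (j + n)))"
proof -
  obtain B where "\<And>J. \<bar>kker g J\<bar> \<le> B"
    using kker_bounded assms(1) by blast
  from summable_norm[OF summable_norm_bounded_mult_shift[OF this assms(2)]]
  show ?thesis by (simp add: Wsum_def norm_mult)
qed

lemma summable_weighted_tail_convolution:
  fixes K a u :: "nat \<Rightarrow> real"
  assumes K: "\<And>n. 0 \<le> K n" "mono K"
    and a: "\<And>j. 0 \<le> a j" "summable a"
    and u: "\<And>n. 0 \<le> u n" "summable u" "summable (\<lambda>n. K n * u n)"
  shows "summable (\<lambda>n. K n * (\<Sum>j. a j * u (j + n)))"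
proof (rule summableI_nonneg_bounded)
  have conv: "summable (\<lambda>j. a j * u (j + n))" for n
  proof (rule summable_comparison_test')
    show "summable (\<lambda>j. a j * suminf u)"
      using a(2) by (rule summable_mult2)
    show "norm (a j * u (j + n)) \<le> a j * suminf u" for j
      using sum_le_suminf[OF u(2), of "{j + n}"] a(1)[of j] u(1)
      by (simp add: mult_left_mono)
  qed
  show "0 \<le> K n * (\<Sum>j. a j * u (j + n))" for n
    using K(1) a(1) u(1) by (intro mult_nonneg_nonneg suminf_nonneg conv) auto
  fix L
  have "(\<Sum>n<L. K n * (\<Sum>j. a j * u (j + n))) = (\<Sum>j. \<Sum>n<L. K n * (a j * u (j + n)))"
    by (simp add: conv suminf_sum summable_mult flip: suminf_mult)
  also have "\<dots> \<le> (\<Sum>j. a j * (\<Sum>N. K N * u N))"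
  proof (rule suminf_le)
    fix j
    have "K n * (a j * u (j + n)) \<le> a j * (K (n + j) * u (n + j))" for n
      using mult_left_mono[OF monoD[OF K(2), of n "n + j"], of "a j * u (n + j)"] a(1) u(1)
      by (simp add: ac_simps)
    then have "(\<Sum>n<L. K n * (a j * u (j + n))) \<le> a j * (\<Sum>n<L. K (n + j) * u (n + j))"
      by (simp add: sum_distrib_left sum_mono)
    also have "(\<Sum>n<L. K (n + j) * u (n + j)) \<le> (\<Sum>N. K N * u N)"
      using sum_le_suminf[OF u(3), of "(\<lambda>n. n + j) ` {..<L}"] K(1) u(1)
      by (simp add: sum.reindex)
    finally show "(\<Sum>n<L. K n * (a j * u (j + n))) \<le> a j * (\<Sum>N. K N * u N)"
      using a(1) by (simp add: mult_left_mono)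
  qed (use a(2) conv in \<open>auto intro: summable_mult2 summable_sum summable_mult\<close>)
  finally show "(\<Sum>n<L. K n * (\<Sum>j. a j * u (j + n))) \<le> (\<Sum>j. a j * (\<Sum>N. K N * u N))" .
qed

lemma summable_norm_if_summable_powr_weighted:
  fixes c :: "nat \<Rightarrow> 'a :: real_normed_vector"
  assumes "\<alpha> \<ge> 0" "summable (\<lambda>n. real n powr \<alpha> * norm (c n))"
  shows "summable (\<lambda>n. norm (c n))"
proof (rule summable_comparison_test'[OF assms(2), of 1])
  fix n :: nat
  assume "n \<ge> 1"
  then have "1 \<le> real n powr \<alpha>"
    using assms(1) by (intro ge_one_powr_ge_zero) auto
  then show "norm (norm (c n)) \<le> real n powr \<alpha> * norm (c n)"
    using mult_right_mono[of 1 "real n powr \<alpha>" "norm (c n)"] by simp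
qed

lemma summable_kker_weighted_if_summable_powr_weighted:
  fixes u :: "nat \<Rightarrow> real"
  assumes "\<alpha> \<ge> 0" "\<And>n. 0 \<le> u n" "summable (\<lambda>n. real n powr \<alpha> * u n)"
  shows "summable (\<lambda>n. kker (\<alpha> + 1) n * u n)"
proof (rule summable_comparison_test'[of "\<lambda>n. (1 + \<alpha>) * (real n powr \<alpha> * u n)" 1])
  show "summable (\<lambda>n. (1 + \<alpha>) * (real n powr \<alpha> * u n))"
    using assms(3) by (rule summable_mult)
  fix n :: nat
  assume "n \<ge> 1"
  with assms show "norm (kker (\<alpha> + 1) n * u n) \<le> (1 + \<alpha>) * (real n powr \<alpha> * u n)"
    using mult_right_mono[OF kker_le_powr] kker_nonneg[of "\<alpha> + 1" n]
    by (simp add: abs_mult mult.assoc)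
qed

theorem mainTheorem10:
  fixes \<alpha> :: real and c :: "nat \<Rightarrow> complex"
  assumes "\<alpha> > 0"
    and "summable (\<lambda>n. real n powr \<alpha> * norm (c n))"
  shows "in_A_plus \<alpha> c"
proof -
  let ?K = "kker (\<alpha> + 1)" and ?a = "\<lambda>j. \<bar>kker (-\<alpha>) j\<bar>"
  have c: "summable (\<lambda>n. norm (c n))"
    using assms by (intro summable_norm_if_summable_powr_weighted) auto
  have "summable (\<lambda>n. ?K n * (\<Sum>j. ?a j * norm (c (j + n))))"
  proof (rule summable_weighted_tail_convolution)
    show "summable (\<lambda>n. ?K n * norm (c n))"
      using assms by (intro summable_kker_weighted_if_summable_powr_weighted) auto
  qed (use assms c in \<open>auto intro: kker_nonneg mono_kker summable_abs_kker\<close>)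
  then show ?thesis
    unfolding in_A_plus_def
  proof (rule summable_comparison_test'[of _ 0])
    fix n
    have "norm (Wfrac \<alpha> c n) \<le> (\<Sum>j. ?a j * norm (c (j + n)))"
      using norm_Wsum_le[OF _ c, of "-\<alpha>"] assms(1) by (simp add: Wfrac_eq_Wsum[OF assms(1) c])
    then show "norm (?K n * norm (Wfrac \<alpha> c n)) \<le> ?K n * (\<Sum>j. ?a j * norm (c (j + n)))"
      using kker_nonneg[of "\<alpha> + 1" n] assms(1) by (simp add: abs_mult mult_left_mono)
  qed
qed

end
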